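(* Let $R$ be a discrete valuation ring with field of fractions $K$ and uniformizer $\pi$, $V$ a finite-dimensional $K$-vector space, and $L,M$ lattices of $V$. Then $L\cap M\subset m_-(L,M)\subset m_+(L,M)\subset L+M$.
   Context: A lattice of $V$ is a free $R$-submodule $L$ with $K\otimes_R L\to V$ an isomorphism. $m_-(L,M)=\sum_{n\in\mathbb Z}(\pi^nL\cap\pi^{-n}M)$ (the $R$-submodule generated by these) and $m_+(L,M)=\bigcap_{n\in\mathbb Z}(\pi^nL+\pi^{-n}M)$. *)

theory Defs
  imports Complex_Main
begin

definition discrete_valuation :: "('k::field \<Rightarrow> int) \<Rightarrow> bool" where
  "discrete_valuation v \<longleftrightarrow>
     (\<forall>x y. x \<noteq> 0 \<longrightarrow> y \<noteq> 0 \<longrightarrow> v (x * y) = v x + v y) \<and>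
     (\<forall>x y. x \<noteq> 0 \<longrightarrow> y \<noteq> 0 \<longrightarrow> x + y \<noteq> 0 \<longrightarrow> v (x + y) \<ge> min (v x) (v y)) \<and>
     (\<forall>n. \<exists>x. x \<noteq> 0 \<and> v x = n)"

text \<open>R is a discrete valuation ring whose field of fractions is K (the ambient field type):
  R is the valuation ring of a discrete valuation of K.\<close>
definition is_dvr_of :: "'k::field set \<Rightarrow> bool" where
  "is_dvr_of R \<longleftrightarrow> (\<exists>v. discrete_valuation v \<and> R = {x. x = 0 \<or> v x \<ge> 0})"

definition is_uniformizer :: "'k::field set \<Rightarrow> 'k \<Rightarrow> bool" where
  "is_uniformizer R p \<longleftrightarrow> p \<in> R \<and>
     {x \<in> R. \<not> (x \<noteq> 0 \<and> inverse x \<in> R)} = {p * r | r. r \<in> R}"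

definition rspan :: "'k::field set \<Rightarrow> ('k \<Rightarrow> 'v::ab_group_add \<Rightarrow> 'v) \<Rightarrow> 'v set \<Rightarrow> 'v set" where
  "rspan R scale S = {(\<Sum>x\<in>F. scale (c x) x) | F c. finite F \<and> F \<subseteq> S \<and> (\<forall>x\<in>F. c x \<in> R)}"

text \<open>A lattice: a free R-submodule L such that K \<otimes>_R L \<rightarrow> V is an isomorphism,
  i.e. L is the R-span of a K-basis of V.\<close>
definition is_lattice :: "'k::field set \<Rightarrow> ('k \<Rightarrow> 'v::ab_group_add \<Rightarrow> 'v) \<Rightarrow> 'v set \<Rightarrow> bool" where
  "is_lattice R scale L \<longleftrightarrow>
     (\<exists>B. \<not> module.dependent scale B \<and> module.span scale B = UNIV \<and> L = rspan R scale B)"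

definition smul_set :: "('k \<Rightarrow> 'v \<Rightarrow> 'v) \<Rightarrow> 'k \<Rightarrow> 'v set \<Rightarrow> 'v set" where
  "smul_set scale a L = (\<lambda>x. scale a x) ` L"

definition set_plus :: "'v::plus set \<Rightarrow> 'v set \<Rightarrow> 'v set" where
  "set_plus A B = {x + y | x y. x \<in> A \<and> y \<in> B}"

definition m_minus :: "'k::field set \<Rightarrow> ('k \<Rightarrow> 'v::ab_group_add \<Rightarrow> 'v) \<Rightarrow> 'k \<Rightarrow> 'v set \<Rightarrow> 'v set \<Rightarrow> 'v set" where
  "m_minus R scale p L M =
     rspan R scale (\<Union>n::int. smul_set scale (p powi n) L \<inter> smul_set scale (p powi (-n)) M)"

definition m_plus :: "('k::field \<Rightarrow> 'v::ab_group_add \<Rightarrow> 'v) \<Rightarrow> 'k \<Rightarrow> 'v set \<Rightarrow> 'v set \<Rightarrow> 'v set" where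
  "m_plus scale p L M =
     (\<Inter>n::int. set_plus (smul_set scale (p powi n) L) (smul_set scale (p powi (-n)) M))"

end

theory Submission
  imports Defs
begin

text \<open>Each generator \<open>\<pi>\<^sup>n L \<inter> \<pi>\<^sup>-\<^sup>n M\<close> of \<open>m_-(L,M)\<close> lies in \<open>\<pi>\<^sup>k L + \<pi>\<^sup>-\<^sup>k M\<close> for every \<open>k\<close>:
  it lies in \<open>\<pi>\<^sup>k L\<close> if \<open>k \<le> n\<close> and in \<open>\<pi>\<^sup>-\<^sup>k M\<close> otherwise, because the lattices \<open>\<pi>\<^sup>n L\<close>
  decrease with \<open>n\<close>. As \<open>\<pi>\<^sup>k L + \<pi>\<^sup>-\<^sup>k M\<close> is an \<open>R\<close>-module, it contains \<open>m_-(L,M)\<close>.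
  The outer inclusions come from the index \<open>n = 0\<close>.\<close>

lemma is_dvr_of_subring:
  assumes "is_dvr_of R"
  shows "0 \<in> R" and "1 \<in> R"
    and "\<forall>a\<in>R. \<forall>b\<in>R. a + b \<in> R" and "\<forall>a\<in>R. \<forall>b\<in>R. a * b \<in> R"
proof -
  obtain v where dv: "discrete_valuation v" and R: "R = {x. x = 0 \<or> v x \<ge> 0}"
    using assms unfolding is_dvr_of_def by blast
  have vmul: "\<And>x y. x \<noteq> 0 \<Longrightarrow> y \<noteq> 0 \<Longrightarrow> v (x * y) = v x + v y"
    and vadd: "\<And>x y. x \<noteq> 0 \<Longrightarrow> y \<noteq> 0 \<Longrightarrow> x + y \<noteq> 0 \<Longrightarrow> v (x + y) \<ge> min (v x) (v y)"
    using dv unfolding discrete_valuation_def by blast+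
  have "v 1 = 0" using vmul[of 1 1] by simp
  then show "0 \<in> R" "1 \<in> R" using R by auto
  show "\<forall>a\<in>R. \<forall>b\<in>R. a + b \<in> R"
  proof (intro ballI)
    fix a b assume "a \<in> R" "b \<in> R"
    then show "a + b \<in> R"
      unfolding R using vadd[of a b] by (cases "a = 0"; cases "b = 0"; cases "a + b = 0") auto
  qed
  show "\<forall>a\<in>R. \<forall>b\<in>R. a * b \<in> R"
  proof (intro ballI)
    fix a b assume "a \<in> R" "b \<in> R"
    then show "a * b \<in> R" unfolding R using vmul[of a b] by (cases "a = 0"; cases "b = 0") auto
  qed
qed

lemma uniformizer_nonzero:
  assumes "is_dvr_of R" and "is_uniformizer R p"
  shows "p \<noteq> 0"
proof
  assume p0: "p = 0"
  obtain v where dv: "discrete_valuation v" and R: "R = {x. x = 0 \<or> v x \<ge> 0}"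
    using assms(1) unfolding is_dvr_of_def by blast
  have vmul: "\<And>x y. x \<noteq> 0 \<Longrightarrow> y \<noteq> 0 \<Longrightarrow> v (x * y) = v x + v y"
    using dv unfolding discrete_valuation_def by blast
  obtain x where x: "x \<noteq> 0" "v x = 1"
    using dv unfolding discrete_valuation_def by blast
  have "v 1 = 0" using vmul[of 1 1] by simp
  then have "v (inverse x) = -1" using vmul[of x "inverse x"] x by simp
  then have "x \<in> {y \<in> R. \<not> (y \<noteq> 0 \<and> inverse y \<in> R)}" using x R by auto
  then have "x \<in> {p * r | r. r \<in> R}"
    using assms(2) unfolding is_uniformizer_def by blast
  then show False using p0 x by auto
qed

lemma uniformizer_power_in:
  assumes "is_dvr_of R" and "is_uniformizer R p"
  shows "p ^ m \<in> R"
proof (induction m)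
  case 0
  then show ?case using is_dvr_of_subring(2)[OF assms(1)] by simp
next
  case (Suc m)
  have "p \<in> R" using assms(2) unfolding is_uniformizer_def by blast
  then show ?case using Suc is_dvr_of_subring(4)[OF assms(1)] by simp
qed

definition r_submodule :: "'k::field set \<Rightarrow> ('k \<Rightarrow> 'v::ab_group_add \<Rightarrow> 'v) \<Rightarrow> 'v set \<Rightarrow> bool" where
  "r_submodule R scale S \<longleftrightarrow>
     0 \<in> S \<and> (\<forall>x\<in>S. \<forall>y\<in>S. x + y \<in> S) \<and> (\<forall>r\<in>R. \<forall>x\<in>S. scale r x \<in> S)"

lemma rspan_sumI:
  assumes "finite F" and "F \<subseteq> T" and "\<forall>x\<in>F. c x \<in> R"
  shows "(\<Sum>x\<in>F. scale (c x) x) \<in> rspan R scale T"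
  unfolding rspan_def using assms by blast

lemma rspan_least:
  assumes "r_submodule R scale S" and "T \<subseteq> S"
  shows "rspan R scale T \<subseteq> S"
proof
  fix y assume "y \<in> rspan R scale T"
  then obtain F c where y: "y = (\<Sum>x\<in>F. scale (c x) x)"
    and F: "finite F" "F \<subseteq> T" "\<forall>x\<in>F. c x \<in> R"
    unfolding rspan_def by blast
  from F have "(\<Sum>x\<in>F. scale (c x) x) \<in> S"
    by (induction F rule: finite_induct) (use assms in \<open>auto simp: r_submodule_def\<close>)
  then show "y \<in> S" using y by simp
qed

lemma rspan_superset:
  assumes "module scale" and "1 \<in> R"
  shows "T \<subseteq> rspan R scale T"
proof
  interpret module scale by fact
  fix x assume "x \<in> T"
  have "(\<Sum>y\<in>{x}. scale ((\<lambda>_. 1) y) y) \<in> rspan R scale T"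
    using \<open>x \<in> T\<close> assms(2) by (intro rspan_sumI) auto
  then show "x \<in> rspan R scale T" by simp
qed

lemma rspan_add:
  assumes "module scale" and "0 \<in> R" and "\<forall>a\<in>R. \<forall>b\<in>R. a + b \<in> R"
    and "y1 \<in> rspan R scale T" and "y2 \<in> rspan R scale T"
  shows "y1 + y2 \<in> rspan R scale T"
proof -
  interpret module scale by fact
  obtain F1 c1 where y1: "y1 = (\<Sum>x\<in>F1. scale (c1 x) x)"
    and F1: "finite F1" "F1 \<subseteq> T" "\<forall>x\<in>F1. c1 x \<in> R"
    using assms(4) unfolding rspan_def by blast
  obtain F2 c2 where y2: "y2 = (\<Sum>x\<in>F2. scale (c2 x) x)"
    and F2: "finite F2" "F2 \<subseteq> T" "\<forall>x\<in>F2. c2 x \<in> R"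
    using assms(5) unfolding rspan_def by blast
  define d1 where "d1 x = (if x \<in> F1 then c1 x else 0)" for x
  define d2 where "d2 x = (if x \<in> F2 then c2 x else 0)" for x
  have "(\<Sum>x\<in>F1 \<union> F2. scale (d1 x) x) = y1"
    unfolding y1 by (rule sum.mono_neutral_cong_right) (auto simp: d1_def F1 F2)
  moreover have "(\<Sum>x\<in>F1 \<union> F2. scale (d2 x) x) = y2"
    unfolding y2 by (rule sum.mono_neutral_cong_right) (auto simp: d2_def F1 F2)
  ultimately have "y1 + y2 = (\<Sum>x\<in>F1 \<union> F2. scale (d1 x + d2 x) x)"
    by (simp add: scale_left_distrib sum.distrib)
  moreover have "\<forall>x\<in>F1 \<union> F2. d1 x + d2 x \<in> R"
    using F1 F2 assms(2,3) by (auto simp: d1_def d2_def)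
  ultimately show ?thesis
    using F1 F2 rspan_sumI[of "F1 \<union> F2" T "\<lambda>x. d1 x + d2 x" R scale] by auto
qed

lemma rspan_scale:
  assumes "module scale" and "\<forall>a\<in>R. \<forall>b\<in>R. a * b \<in> R"
    and "r \<in> R" and "y \<in> rspan R scale T"
  shows "scale r y \<in> rspan R scale T"
proof -
  interpret module scale by fact
  obtain F c where y: "y = (\<Sum>x\<in>F. scale (c x) x)"
    and F: "finite F" "F \<subseteq> T" "\<forall>x\<in>F. c x \<in> R"
    using assms(4) unfolding rspan_def by blast
  have "scale r y = (\<Sum>x\<in>F. scale (r * c x) x)"
    by (simp add: y scale_sum_right)
  moreover have "\<forall>x\<in>F. r * c x \<in> R" using F(3) assms(2,3) by blast
  ultimately show ?thesis using F rspan_sumI[of F T "\<lambda>x. r * c x" R scale] by simp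
qed

lemma rspan_r_submodule:
  assumes "module scale" and "0 \<in> R"
    and "\<forall>a\<in>R. \<forall>b\<in>R. a + b \<in> R" and "\<forall>a\<in>R. \<forall>b\<in>R. a * b \<in> R"
  shows "r_submodule R scale (rspan R scale T)"
proof -
  have "0 \<in> rspan R scale T"
    unfolding rspan_def by (rule CollectI, rule exI[of _ "{}"]) auto
  then show ?thesis
    unfolding r_submodule_def using rspan_add[OF assms(1-3)] rspan_scale[OF assms(1,4)] by blast
qed

lemma smul_set_r_submodule:
  assumes "module scale" and "r_submodule R scale S"
  shows "r_submodule R scale (smul_set scale a S)"
proof -
  interpret module scale by fact
  have "scale a 0 \<in> scale a ` S"
    using assms(2) unfolding r_submodule_def by blast
  moreover have "scale a x + scale a y \<in> scale a ` S" if "x \<in> S" "y \<in> S" for x y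
    using that assms(2) unfolding r_submodule_def by (metis image_eqI scale_right_distrib)
  moreover have "scale r (scale a x) \<in> scale a ` S" if "r \<in> R" "x \<in> S" for r x
  proof -
    have "scale r (scale a x) = scale a (scale r x)" by (simp add: mult.commute)
    then show ?thesis using that assms(2) unfolding r_submodule_def by blast
  qed
  ultimately show ?thesis
    unfolding r_submodule_def smul_set_def by auto
qed

lemma set_plus_r_submodule:
  assumes "module scale" and "r_submodule R scale A" and "r_submodule R scale B"
  shows "r_submodule R scale (set_plus A B)"
proof -
  interpret module scale by fact
  have "0 + 0 \<in> set_plus A B"
    using assms(2,3) unfolding r_submodule_def set_plus_def by blast
  moreover have "(a1 + b1) + (a2 + b2) \<in> set_plus A B"
    if "a1 \<in> A" "a2 \<in> A" "b1 \<in> B" "b2 \<in> B" for a1 a2 b1 b2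
  proof -
    have "(a1 + b1) + (a2 + b2) = (a1 + a2) + (b1 + b2)" by (simp add: algebra_simps)
    then show ?thesis
      using that assms(2,3) unfolding r_submodule_def set_plus_def by blast
  qed
  moreover have "scale r (a + b) \<in> set_plus A B" if "r \<in> R" "a \<in> A" "b \<in> B" for r a b
    using that assms(2,3) unfolding r_submodule_def set_plus_def
    by (fastforce simp: scale_right_distrib)
  ultimately show ?thesis
    unfolding r_submodule_def by (auto simp: set_plus_def)
qed

lemma smul_set_powi_antimono:
  assumes "module scale" and "r_submodule R scale S" and "(p::'k::field) \<noteq> 0"
    and "\<forall>m::nat. p ^ m \<in> R" and "n \<le> k"
  shows "smul_set scale (p powi k) S \<subseteq> smul_set scale (p powi n) S"
proof
  interpret module scale by fact
  fix y assume "y \<in> smul_set scale (p powi k) S"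
  then obtain x where x: "y = scale (p powi k) x" "x \<in> S" unfolding smul_set_def by blast
  have "p powi k = p powi n * p ^ nat (k - n)"
    using assms(3,5) by (metis add_diff_cancel_left' le_add_diff_inverse nat_0_le
        diff_ge_0_iff_ge power_int_add power_int_of_nat)
  then have "y = scale (p powi n) (scale (p ^ nat (k - n)) x)" using x by simp
  moreover have "scale (p ^ nat (k - n)) x \<in> S"
    using assms(2,4) x(2) unfolding r_submodule_def by blast
  ultimately show "y \<in> smul_set scale (p powi n) S" unfolding smul_set_def by blast
qed

lemma inter_subset_m_minus:
  assumes "module scale" and "1 \<in> R"
  shows "L \<inter> M \<subseteq> m_minus R scale p L M"
proof -
  interpret module scale by fact
  have "L \<inter> M = smul_set scale (p powi 0) L \<inter> smul_set scale (p powi (-0)) M"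
    unfolding smul_set_def by simp
  also have "\<dots> \<subseteq> (\<Union>n::int. smul_set scale (p powi n) L \<inter> smul_set scale (p powi (-n)) M)"
    by (rule UN_upper) simp
  also have "\<dots> \<subseteq> m_minus R scale p L M"
    unfolding m_minus_def by (rule rspan_superset[OF assms])
  finally show ?thesis .
qed

lemma m_minus_subset_m_plus:
  assumes "module scale" and "0 \<in> R"
    and "\<forall>a\<in>R. \<forall>b\<in>R. a + b \<in> R" and "\<forall>a\<in>R. \<forall>b\<in>R. a * b \<in> R"
    and "r_submodule R scale L" and "r_submodule R scale M"
    and "p \<noteq> 0" and "\<forall>m::nat. p ^ m \<in> R"
  shows "m_minus R scale p L M \<subseteq> m_plus scale p L M"
  unfolding m_plus_def
proof (rule INT_greatest)
  fix k :: int
  define pL where "pL = smul_set scale (p powi k) L"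
  define pM where "pM = smul_set scale (p powi (-k)) M"
  have pL: "r_submodule R scale pL" and pM: "r_submodule R scale pM"
    unfolding pL_def pM_def using smul_set_r_submodule assms(1,5,6) by blast+
  have "smul_set scale (p powi n) L \<inter> smul_set scale (p powi (-n)) M \<subseteq> set_plus pL pM" for n
  proof (cases "k \<le> n")
    case True
    then have "smul_set scale (p powi n) L \<subseteq> pL"
      unfolding pL_def using smul_set_powi_antimono assms(1,5,7,8) by blast
    moreover have "0 \<in> pM" using pM unfolding r_submodule_def by blast
    ultimately show ?thesis unfolding set_plus_def by force
  next
    case False
    have "smul_set scale (p powi (-n)) M \<subseteq> pM"
      unfolding pM_def using False smul_set_powi_antimono[OF assms(1,6,7,8), of "-k" "-n"] by simp
    moreover have "0 \<in> pL" using pL unfolding r_submodule_def by blast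
    ultimately show ?thesis unfolding set_plus_def by force
  qed
  then show "m_minus R scale p L M \<subseteq> set_plus pL pM"
    unfolding m_minus_def
    by (intro rspan_least set_plus_r_submodule[OF assms(1) pL pM]) blast
qed

lemma m_plus_subset_set_plus:
  assumes "module scale"
  shows "m_plus scale p L M \<subseteq> set_plus L M"
proof -
  interpret module scale by fact
  have "m_plus scale p L M \<subseteq> set_plus (smul_set scale (p powi 0) L) (smul_set scale (p powi (-0)) M)"
    unfolding m_plus_def by (rule INT_lower) simp
  also have "\<dots> = set_plus L M" unfolding smul_set_def by simp
  finally show ?thesis .
qed

theorem proposition1p2p1:
  fixes R :: "'k::field set" and p :: 'k
    and scale :: "'k \<Rightarrow> 'v::ab_group_add \<Rightarrow> 'v"
    and L M :: "'v set"
  assumes "is_dvr_of R"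
    and "is_uniformizer R p"
    and "\<exists>Bas. finite_dimensional_vector_space scale Bas"
    and "is_lattice R scale L" and "is_lattice R scale M"
  shows "L \<inter> M \<subseteq> m_minus R scale p L M \<and> m_minus R scale p L M \<subseteq> m_plus scale p L M
         \<and> m_plus scale p L M \<subseteq> set_plus L M"
proof -
  obtain Bas where "finite_dimensional_vector_space scale Bas" using assms(3) by blast
  then interpret finite_dimensional_vector_space scale Bas .
  have md: "module scale" by unfold_locales
  note R = is_dvr_of_subring[OF assms(1)]
  have L: "r_submodule R scale L" and M: "r_submodule R scale M"
    using assms(4,5) rspan_r_submodule[OF md R(1,3,4)] unfolding is_lattice_def by blast+
  have "p \<noteq> 0" using uniformizer_nonzero assms(1,2) .
  moreover have "\<forall>m. p ^ m \<in> R" using uniformizer_power_in assms(1,2) by blast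
  ultimately show ?thesis
    using inter_subset_m_minus[OF md R(2)] m_minus_subset_m_plus[OF md R(1,3,4) L M]
      m_plus_subset_set_plus[OF md] by simp
qed

end
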